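(* Let $(E,+,0)$ be an abelian group with a translation-invariant preorder $\le$ whose positive cone $E_+=\{x\in E:x\ge0\}$ is pointed ($E_+\cap(-E_+)=\{0\}$), and let $u\in E_+$. Let $\mathcal{A}$ be a finite set of group endomorphisms $T:E\to E$, closed under composition, each of which is monotone ($x\le y\Rightarrow T(x)\le T(y)$) and subunital ($T(u)\le u$). Define $d(T)=u-T(u)\ge0$ and assume the cocycle identity \[ d(T\circ S)=d(T)+T(d(S))\quad\text{for all }T,S\in\mathcal{A}. \] Then for every $T\in\mathcal{A}$ there exists $n$ with $1\le n\le|\mathcal{A}|$ such that $T^n(d(T))=0$.
   Context: Translation-invariant means $x\le y$ implies $x+z\le y+z$ for all $z$. *)

theory Defs
  imports Main
begin

end

theory Submission
  imports Defs
begin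

text \<open>
  By pigeonhole, two of the powers \<open>T\<^sup>1, \<dots>, T\<^bsup>|\<A>|+1\<^esup>\<close> coincide, say
  \<open>T\<^sup>i = T\<^sup>i \<circ> T\<^sup>m\<close> with \<open>i \<le> |\<A>|\<close> and \<open>m \<ge> 1\<close>.  The cocycle identity then gives
  \<open>T\<^sup>i(d(T\<^sup>m)) = 0\<close>, and \<open>d(T\<^sup>m) = d(T) + T(d(T\<^bsup>m-1\<^esup>))\<close> writes this as a sum of two
  elements of the cone, of which \<open>T\<^sup>i(d(T))\<close> is one; pointedness forces both to vanish.
\<close>

lemma funpow_mem_compose_closed:
  assumes "\<And>f g. f \<in> A \<Longrightarrow> g \<in> A \<Longrightarrow> f \<circ> g \<in> A" and "f \<in> A" and "n \<noteq> 0"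
  shows "f ^^ n \<in> A"
  using \<open>n \<noteq> 0\<close>
proof (induction n)
  case (Suc n)
  show ?case
  proof (cases "n = 0")
    case False
    then show ?thesis
      using Suc.IH assms(1,2) by (metis funpow.simps(2))
  qed (use assms(2) in simp)
qed simp

lemma finite_range_seq_repeats:
  assumes "finite A" and "\<And>n. 1 \<le> n \<Longrightarrow> n \<le> card A + 1 \<Longrightarrow> g n \<in> A"
  shows "\<exists>i j. 1 \<le> i \<and> i < j \<and> j \<le> card A + 1 \<and> g i = g j"
proof -
  have "g ` {1..card A + 1} \<subseteq> A"
    using assms(2) by auto
  then have "\<not> inj_on g {1..card A + 1}"
    using card_inj_on_le[OF _ _ \<open>finite A\<close>] by fastforce
  then obtain i j where "i \<in> {1..card A + 1}" "j \<in> {1..card A + 1}" "i \<noteq> j" "g i = g j"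
    unfolding inj_on_def by blast
  then show ?thesis
    by (cases "i < j") (metis atLeastAtMost_iff linorder_neqE_nat)+
qed

lemma pointed_cone_add_eq_0:
  assumes pointed: "{x. le 0 x} \<inter> uminus ` {x. le 0 x} = {0}"
    and "le 0 x" and "le 0 y" and "x + y = (0::'a::ab_group_add)"
  shows "x = 0"
proof -
  have "x = - y"
    using \<open>x + y = 0\<close> by (simp add: eq_neg_iff_add_eq_0)
  then have "x \<in> {x. le 0 x} \<inter> uminus ` {x. le 0 x}"
    using assms(2,3) by blast
  then show ?thesis
    using pointed by blast
qed

locale subunital_cocycle =
  fixes le :: "'a::ab_group_add \<Rightarrow> 'a \<Rightarrow> bool"
    and u :: "'a"
    and \<A> :: "('a \<Rightarrow> 'a) set"
    and d :: "('a \<Rightarrow> 'a) \<Rightarrow> 'a"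
  assumes reflexive: "\<And>x. le x x"
    and transl_inv: "\<And>x y z. le x y \<Longrightarrow> le (x + z) (y + z)"
    and pointed: "{x. le 0 x} \<inter> uminus ` {x. le 0 x} = {0}"
    and comp_closed: "\<And>T S. T \<in> \<A> \<Longrightarrow> S \<in> \<A> \<Longrightarrow> T \<circ> S \<in> \<A>"
    and additive: "\<And>T x y. T \<in> \<A> \<Longrightarrow> T (x + y) = T x + T y"
    and monotone: "\<And>T x y. T \<in> \<A> \<Longrightarrow> le x y \<Longrightarrow> le (T x) (T y)"
    and subunital: "\<And>T. T \<in> \<A> \<Longrightarrow> le (T u) u"
    and d_def: "\<And>T. d T = u - T u"
    and cocycle: "\<And>T S. T \<in> \<A> \<Longrightarrow> S \<in> \<A> \<Longrightarrow> d (T \<circ> S) = d T + T (d S)"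
begin

lemma funpow_mem: "T \<in> \<A> \<Longrightarrow> n \<noteq> 0 \<Longrightarrow> T ^^ n \<in> \<A>"
  by (rule funpow_mem_compose_closed[OF comp_closed])

lemma map_zero: "T \<in> \<A> \<Longrightarrow> T 0 = 0"
  using additive[of T 0 0] by simp

lemma map_nonneg: "T \<in> \<A> \<Longrightarrow> le 0 x \<Longrightarrow> le 0 (T x)"
  using monotone[of T 0 x] map_zero[of T] by simp

lemma d_id: "d id = 0"
  by (simp add: d_def)

lemma d_nonneg: "T \<in> \<A> \<Longrightarrow> le 0 (d T)"
  using transl_inv[OF subunital, of T "- T u"] by (simp add: d_def)

lemma d_funpow_nonneg: "T \<in> \<A> \<Longrightarrow> le 0 (d (T ^^ n))"
  using d_nonneg[OF funpow_mem] by (cases "n = 0") (simp_all add: d_id reflexive)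

lemma d_funpow_Suc: "T \<in> \<A> \<Longrightarrow> d (T ^^ Suc n) = d T + T (d (T ^^ n))"
  using cocycle[OF _ funpow_mem, of T T n] by (cases "n = 0") (simp_all add: d_id map_zero)

lemma absorbing_map_kills_d:
  assumes S: "S \<in> \<A>" and T: "T \<in> \<A>" and absorb: "S \<circ> T ^^ Suc m = S"
  shows "S (d T) = 0"
proof -
  have "d S = d S + S (d (T ^^ Suc m))"
    using cocycle[OF S funpow_mem[OF T], of "Suc m"] absorb by simp
  then have "S (d (T ^^ Suc m)) = 0"
    by simp
  then have "S (d T) + S (T (d (T ^^ m))) = 0"
    by (simp only: d_funpow_Suc[OF T] additive[OF S])
  then show ?thesis
    by (rule pointed_cone_add_eq_0[of le, OF pointed, rotated 2])
      (use map_nonneg S T d_nonneg d_funpow_nonneg in blast)+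
qed

lemma funpow_kills_d:
  assumes "finite \<A>" and T: "T \<in> \<A>"
  shows "\<exists>n. 1 \<le> n \<and> n \<le> card \<A> \<and> (T ^^ n) (d T) = 0"
proof -
  obtain i j where i: "1 \<le> i" and "i < j" "j \<le> card \<A> + 1" and eq: "T ^^ i = T ^^ j"
    using finite_range_seq_repeats[OF \<open>finite \<A>\<close>, of "\<lambda>n. T ^^ n"] funpow_mem[OF T] by force
  then obtain m where "j = i + Suc m"
    using less_imp_Suc_add by fastforce
  then have "T ^^ i \<circ> T ^^ Suc m = T ^^ i"
    using eq by (simp only: funpow_add)
  then have "(T ^^ i) (d T) = 0"
    using absorbing_map_kills_d[OF funpow_mem[OF T] T] i by simp
  then show ?thesis
    using i \<open>i < j\<close> \<open>j \<le> card \<A> + 1\<close> by auto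
qed

end

theorem theorem9p1:
  fixes le :: "'a::ab_group_add \<Rightarrow> 'a \<Rightarrow> bool"
    and u :: "'a"
    and \<A> :: "('a \<Rightarrow> 'a) set"
    and d :: "('a \<Rightarrow> 'a) \<Rightarrow> 'a"
  assumes refl: "\<And>x. le x x"
    and trans: "\<And>x y z. le x y \<Longrightarrow> le y z \<Longrightarrow> le x z"
    and transl_inv: "\<And>x y z. le x y \<Longrightarrow> le (x + z) (y + z)"
    and pointed: "{x. le 0 x} \<inter> uminus ` {x. le 0 x} = {0}"
    and u_pos: "le 0 u"
    and fin: "finite \<A>"
    and comp_closed: "\<And>T S. T \<in> \<A> \<Longrightarrow> S \<in> \<A> \<Longrightarrow> T \<circ> S \<in> \<A>"
    and additive: "\<And>T x y. T \<in> \<A> \<Longrightarrow> T (x + y) = T x + T y"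
    and monotone: "\<And>T x y. T \<in> \<A> \<Longrightarrow> le x y \<Longrightarrow> le (T x) (T y)"
    and subunital: "\<And>T. T \<in> \<A> \<Longrightarrow> le (T u) u"
    and d_def: "\<And>T. d T = u - T u"
    and cocycle: "\<And>T S. T \<in> \<A> \<Longrightarrow> S \<in> \<A> \<Longrightarrow> d (T \<circ> S) = d T + T (d S)"
  shows "\<forall>T\<in>\<A>. \<exists>n. 1 \<le> n \<and> n \<le> card \<A> \<and> (T ^^ n) (d T) = 0"
proof -
  interpret subunital_cocycle le u \<A> d
    by unfold_locales (fact refl transl_inv pointed comp_closed additive monotone subunital
        d_def cocycle)+
  show ?thesis
    using funpow_kills_d[OF fin] by blast
qed

end
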